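(* Under Strategy 1 (described in the context), the expected number of uncles created during an attack cycle and eventually referred is $$\mathbb{E}[U]=q+\frac{q^3\gamma}{p-q}-\frac{p^3}{p-q}\Bigl(\frac qp\Bigr)^{n_1+1}\gamma-q^{n_1+1}(1-\gamma).$$
   Context: Honest hashrate $p$, attacker hashrate $q$, $p+q=1$, $0<q<p$; $\gamma\in[0,1]$ is the fraction of honest hashrate mining on the attacker's block during a public competition between equal-height blocks. Each new block is the attacker's with probability $q$, independently. Attack cycles are i.i.d. words in S (attacker block) and H (honest block): H, SHS, SHH, or SSwH with $w$ a Dyck word; $\mathbb{P}[H]=p$, $\mathbb{P}[SHS]=pq^2$, $\mathbb{P}[SHH]=p^2q$, $\mathbb{P}[SSwH]=q^2p(pq)^{|w|}$. Ethereum rules: an uncle is a non-official block whose parent is official; a nephew (official block) may refer an uncle at distance (height difference) at most $n_1$ ($n_1\ge2$ an integer). Strategy 1: the attacker withholds his blocks, and each time the honest miners publish a block he publishes the part of his secret fork of the same height as the public honest chain (creating a competition, in which a fraction $\gamma$ of honest hashrate mines on the attacker's branch); the attacker's fork wins in cycles starting with SS; all miners refer all possible uncles. $U(\omega)$ is the number of uncles created during cycle $\omega$ that are referred by nephews in $\omega$ or in a later cycle. *)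

theory Defs
  imports "HOL-Analysis.Analysis"
begin

text \<open>
Encoding: a block event is a bool, True = S (attacker block), False = H (honest block). Each honest block additionally carries a flag
(True = it was mined by the gamma-fraction of honest hashrate, i.e. on the attacker's
branch when a public competition is ongoing); the j-th honest block of the cycle
(j = 1, 2, ...) has flag  g ! (j - 1).
\<close>

inductive dyck :: "bool list \<Rightarrow> bool" where
  dyck_Nil: "dyck []"
| dyck_step: "dyck u \<Longrightarrow> dyck v \<Longrightarrow> dyck (True # u @ False # v)"

definition nS :: "bool list \<Rightarrow> nat" where
  "nS w = length (filter (\<lambda>x. x) w)"

definition nH :: "bool list \<Rightarrow> nat" where
  "nH w = length (filter (\<lambda>x. \<not> x) w)"

definition is_cycle :: "bool list \<Rightarrow> bool" where
  "is_cycle \<omega> \<longleftrightarrow> \<omega> = [False] \<or> \<omega> = [True, False, True] \<or> \<omega> = [True, False, False]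
     \<or> (\<exists>w. dyck w \<and> \<omega> = True # True # w @ [False])"

definition cycle_prob :: "real \<Rightarrow> real \<Rightarrow> bool list \<Rightarrow> real" where
  "cycle_prob p q \<omega> = q ^ nS \<omega> * p ^ nH \<omega>"

definition flags_prob :: "real \<Rightarrow> bool list \<Rightarrow> real" where
  "flags_prob \<gamma> g = (\<Prod>b\<leftarrow>g. if b then \<gamma> else 1 - \<gamma>)"

definition cycle_outcomes :: "(bool list \<times> bool list) set" where
  "cycle_outcomes = {(\<omega>, g). is_cycle \<omega> \<and> length g = nH \<omega>}"

text \<open>Blocks: Base is the official block at the start of the cycle (height 0);
  Blk b h is the attacker's (b = True) or honest (b = False) block of the cycle at
  height h (heights relative to the start of the cycle).\<close>
datatype blk = Base | Blk bool nat

fun blk_height :: "blk \<Rightarrow> nat" where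
  "blk_height Base = 0"
| "blk_height (Blk b h) = h"

definition cycle_blocks :: "bool list \<Rightarrow> blk set" where
  "cycle_blocks \<omega> = {Blk True h | h. 1 \<le> h \<and> h \<le> nS \<omega>} \<union> {Blk False h | h. 1 \<le> h \<and> h \<le> nH \<omega>}"

text \<open>Parent of a block under Strategy 1: the attacker mines on his own fork; the honest
  block at height h \<ge> 2 is mined during a competition at height h-1, on the attacker's
  block if it is mined by the gamma-fraction, otherwise on the honest block.\<close>
fun blk_parent :: "bool list \<Rightarrow> blk \<Rightarrow> blk" where
  "blk_parent g Base = Base"
| "blk_parent g (Blk True h) = (if h \<le> 1 then Base else Blk True (h - 1))"
| "blk_parent g (Blk False h) = (if h \<le> 1 then Base else Blk (g ! (h - 1)) (h - 1))"

fun mined_time :: "bool list \<Rightarrow> blk \<Rightarrow> nat" where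
  "mined_time \<omega> Base = 0"
| "mined_time \<omega> (Blk b h) =
     (LEAST i. i < length \<omega> \<and> \<omega> ! i = b \<and> length (filter (\<lambda>x. x = b) (take (Suc i) \<omega>)) = h)"

text \<open>Time at which a block is published: honest blocks immediately; the attacker's block
  of height h when the honest block of the same height is published, otherwise at the
  end of the cycle.\<close>
fun pub_time :: "bool list \<Rightarrow> blk \<Rightarrow> nat" where
  "pub_time \<omega> Base = 0"
| "pub_time \<omega> (Blk False h) = mined_time \<omega> (Blk False h)"
| "pub_time \<omega> (Blk True h) =
     (if h \<le> nH \<omega> then mined_time \<omega> (Blk False h) else length \<omega> - 1)"

definition win_tip :: "bool list \<Rightarrow> blk" where
  "win_tip \<omega> = (if nH \<omega> < nS \<omega> then Blk True (nS \<omega>) else Blk False (nH \<omega>))"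

definition official :: "bool list \<Rightarrow> bool list \<Rightarrow> blk \<Rightarrow> bool" where
  "official \<omega> g b \<longleftrightarrow> (win_tip \<omega>, b) \<in> {(x, blk_parent g x) | x. True}\<^sup>*"

definition is_uncle :: "bool list \<Rightarrow> bool list \<Rightarrow> blk \<Rightarrow> bool" where
  "is_uncle \<omega> g b \<longleftrightarrow> b \<in> cycle_blocks \<omega> \<and> \<not> official \<omega> g b \<and> official \<omega> g (blk_parent g b)"

text \<open>An uncle is referred if some official block mined after its publication and at
  height difference 1..n1 refers it: either an official block of the cycle, or an official
  block of a later cycle (later cycles provide official blocks, all mined after the end
  of this cycle, at every height above the winning tip).\<close>
definition is_referred :: "nat \<Rightarrow> bool list \<Rightarrow> bool list \<Rightarrow> blk \<Rightarrow> bool" where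
  "is_referred n1 \<omega> g b \<longleftrightarrow> is_uncle \<omega> g b \<and>
     ((\<exists>k \<in> cycle_blocks \<omega>. official \<omega> g k \<and> pub_time \<omega> b < mined_time \<omega> k
          \<and> blk_height b < blk_height k \<and> blk_height k \<le> blk_height b + n1)
      \<or> blk_height (win_tip \<omega>) + 1 \<le> blk_height b + n1)"

definition uncles_referred :: "nat \<Rightarrow> bool list \<Rightarrow> bool list \<Rightarrow> nat" where
  "uncles_referred n1 \<omega> g = card {b \<in> cycle_blocks \<omega>. is_referred n1 \<omega> g b}"

end

theory Submission
  imports Defs
begin

text \<open>
  When the honest miners win a cycle (H or SHH) at most one block is orphaned and the count is
  read off directly.  When the attacker wins (SHS and SSwH) his whole fork becomes official, so the
  uncles are the honest blocks whose parent is official: the first one, and each later one exactly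
  when it was mined by the \<open>\<gamma>\<close>-fraction on the attacker's branch.  Such an uncle is referred iff
  some official block at most \<open>n1\<close> levels above it is mined after it, i.e. iff the attacker's lead
  just after it is below \<open>n1\<close>.  Averaging over the flags, the expected count is \<open>\<gamma>\<close> times the number
  of honest blocks with small lead plus \<open>1 - \<gamma>\<close> times the indicator for the first one.

  For SSwH these are additive functionals of the Dyck word \<open>w\<close>.  The first-return decomposition
  \<open>w = S u H v\<close> turns their expectations, as functions of the initial lead, into linear recurrences:
  the total weight \<open>C = \<Sum>\<^sub>w P(w)\<close> solves \<open>C = 1 + p q C\<^sup>2\<close>, so \<open>C = 1/p\<close>, and the two counting
  sums are the unique solutions that vanish for large leads.
\<close>

lemma rtrancl_graph_iff_funpow: "(x, y) \<in> {(x, f x) | x. True}\<^sup>* \<longleftrightarrow> (\<exists>n. y = (f ^^ n) x)"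
proof
  assume "(x, y) \<in> {(x, f x) | x. True}\<^sup>*"
  then show "\<exists>n. y = (f ^^ n) x"
  proof (induction rule: rtrancl_induct)
    case (step y z)
    then obtain n where "y = (f ^^ n) x" by blast
    with step show ?case by (intro exI[of _ "Suc n"]) auto
  qed (auto intro: exI[of _ 0])
next
  have "(x, (f ^^ n) x) \<in> {(x, f x) | x. True}\<^sup>*" for n
    by (induction n) (auto intro: rtrancl_into_rtrancl)
  then show "\<exists>n. y = (f ^^ n) x \<Longrightarrow> (x, y) \<in> {(x, f x) | x. True}\<^sup>*" by blast
qed

lemma sum_lists_length_Suc:
  "(\<Sum>g | length g = Suc n. f g) = (\<Sum>g | length g = n. f (True # g) + f (False # g))"
proof -
  have "{g :: bool list. length g = Suc n} = (\<lambda>(g, b). b # g) ` ({g. length g = n} \<times> UNIV)"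
    using lists_length_Suc_eq[of UNIV n] by simp
  then have "(\<Sum>g | length g = Suc n. f g) = (\<Sum>(g, b) \<in> {g. length g = n} \<times> UNIV. f (b # g))"
    by (simp add: sum.reindex inj_on_def case_prod_beta)
  also have "\<dots> = (\<Sum>g | length g = n. f (True # g) + f (False # g))"
    by (simp add: sum.cartesian_product[symmetric] UNIV_bool add.commute)
  finally show ?thesis .
qed

lemma has_sum_Sigma_nonneg:
  fixes f :: "'a \<Rightarrow> 'b \<Rightarrow> real"
  assumes "\<And>x. x \<in> A \<Longrightarrow> (f x has_sum g x) (B x)" "(g has_sum s) A"
    and "\<And>x y. x \<in> A \<Longrightarrow> y \<in> B x \<Longrightarrow> 0 \<le> f x y"
  shows "((\<lambda>(x, y). f x y) has_sum s) (Sigma A B)"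
proof (rule has_sum_SigmaI)
  show "((\<lambda>y. (\<lambda>(x, y). f x y) (x, y)) has_sum g x) (B x)" if "x \<in> A" for x
    using assms(1)[OF that] by simp
  then show "(\<lambda>(x, y). f x y) summable_on Sigma A B"
    using assms(2,3) by (intro summable_on_SigmaI) (auto intro: has_sum_imp_summable)
qed (fact assms(2))

lemma has_sum_product_nonneg:
  fixes f g :: "'a \<Rightarrow> real"
  assumes "(f has_sum a) A" "(g has_sum b) B" "\<And>x. x \<in> A \<Longrightarrow> 0 \<le> f x" "\<And>y. y \<in> B \<Longrightarrow> 0 \<le> g y"
  shows "((\<lambda>(x, y). f x * g y) has_sum (a * b)) (A \<times> B)"
proof (rule has_sum_Sigma_nonneg)
  show "((\<lambda>y. f x * g y) has_sum f x * b) B" for x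
    using has_sum_cmult_right[OF assms(2)] .
  show "((\<lambda>x. f x * b) has_sum a * b) A"
    using has_sum_cmult_left[OF assms(1)] .
qed (use assms in auto)

lemma eq_if_backward_recurrence:
  fixes f g :: "int \<Rightarrow> 'a"
  assumes "\<And>l. N \<le> l \<Longrightarrow> f l = g l" and "\<And>l. l < N \<Longrightarrow> f (l + 1) = g (l + 1) \<Longrightarrow> f l = g l"
  shows "f l = g l"
proof (cases "N \<le> l")
  case False
  then have "l \<le> N" by simp
  then show ?thesis
  proof (induction l rule: int_le_induct)
    case base
    then show ?case using assms(1) by simp
  next
    case (step i)
    then show ?case using assms(2)[of "i - 1"] by simp
  qed
qed (use assms(1) in simp)

lemma nS_eq_count_list: "nS w = count_list w True"
  by (induction w) (simp_all add: nS_def)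

lemma nH_eq_count_list: "nH w = count_list w False"
  by (induction w) (simp_all add: nH_def)

lemma count_list_take_Suc:
  "i < length w \<Longrightarrow> count_list (take (Suc i) w) b = count_list (take i w) b + (if w ! i = b then 1 else 0)"
  by (simp add: take_Suc_conv_app_nth)

lemma count_list_take_mono:
  assumes "i \<le> j"
  shows "count_list (take i w) b \<le> count_list (take j w) b"
proof -
  have "take j w = take i w @ drop i (take j w)"
    using assms by (metis append_take_drop_id min.absorb1 take_take)
  then show ?thesis by (metis count_list_append le_add1)
qed

lemma count_list_take_le: "count_list (take i w) b \<le> count_list w b"
  using count_list_append[of "take i w" "drop i w" b] by simp

lemma count_list_take_Suc_less:
  assumes "i < j" "j < length w" "w ! j = b"
  shows "count_list (take (Suc i) w) b < count_list (take (Suc j) w) b"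
proof -
  have "count_list (take (Suc i) w) b \<le> count_list (take j w) b"
    using assms(1) by (intro count_list_take_mono) simp
  also have "\<dots> < count_list (take (Suc j) w) b"
    using assms(2,3) by (simp add: count_list_take_Suc)
  finally show ?thesis .
qed

lemma nth_occurrence_exists:
  "1 \<le> h \<Longrightarrow> h \<le> count_list w b \<Longrightarrow> \<exists>i < length w. w ! i = b \<and> count_list (take (Suc i) w) b = h"
proof (induction w rule: rev_induct)
  case (snoc x w)
  show ?case
  proof (cases "h \<le> count_list w b")
    case True
    with snoc obtain i where "i < length w" "w ! i = b" "count_list (take (Suc i) w) b = h"
      by blast
    then show ?thesis by (intro exI[of _ i]) (auto simp: nth_append)
  next
    case False
    with snoc.prems have "x = b" "h = Suc (count_list w b)" by (auto split: if_splits)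
    then show ?thesis by (intro exI[of _ "length w"]) auto
  qed
qed simp

lemma nth_occurrence_unique:
  assumes "i < length w" "j < length w" "w ! i = b" "w ! j = b"
    and "count_list (take (Suc i) w) b = count_list (take (Suc j) w) b"
  shows "i = j"
  using count_list_take_Suc_less[of i j w b] count_list_take_Suc_less[of j i w b] assms
  by (cases i j rule: linorder_cases) auto

lemma mined_time_eqI:
  assumes "i < length w" "w ! i = b" "count_list (take (Suc i) w) b = h"
  shows "mined_time w (Blk b h) = i"
proof -
  have "length (filter (\<lambda>x. x = b) xs) = count_list xs b" for xs
    by (induction xs) auto
  then have "mined_time w (Blk b h) = (LEAST i. i < length w \<and> w ! i = b \<and> count_list (take (Suc i) w) b = h)"
    by simp
  also have "\<dots> = i"
  proof (rule Least_equality)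
    fix j assume "j < length w \<and> w ! j = b \<and> count_list (take (Suc j) w) b = h"
    then show "i \<le> j" using assms nth_occurrence_unique[of j w i b] by simp
  qed (use assms in simp)
  finally show ?thesis .
qed

declare mined_time.simps(2) [simp del]

lemma mined_time_Blk:
  assumes "1 \<le> h" "h \<le> count_list w b"
  defines "t \<equiv> mined_time w (Blk b h)"
  shows "t < length w" "w ! t = b" "count_list (take (Suc t) w) b = h"
proof -
  obtain i where "i < length w" "w ! i = b" "count_list (take (Suc i) w) b = h"
    using nth_occurrence_exists[OF assms(1,2)] by blast
  moreover from this have "t = i" unfolding t_def by (rule mined_time_eqI)
  ultimately show "t < length w" "w ! t = b" "count_list (take (Suc t) w) b = h" by simp_all
qed

lemma mined_before_attacker_block_iff:
  assumes "1 \<le> j" "j \<le> count_list w True" "t < length w" "w ! t = False"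
  shows "t < mined_time w (Blk True j) \<longleftrightarrow> count_list (take (Suc t) w) True < j"
proof -
  define s where "s = mined_time w (Blk True j)"
  have s: "s < length w" "w ! s = True" "count_list (take (Suc s) w) True = j"
    using mined_time_Blk[OF assms(1,2)] unfolding s_def by auto
  have "s \<noteq> t" using s(2) assms(4) by auto
  then show ?thesis
    unfolding s_def[symmetric]
    using count_list_take_Suc_less[of t s w True] count_list_take_mono[of "Suc s" "Suc t" w True] s
    by (cases s t rule: linorder_cases) auto
qed

section \<open>Official blocks and referred uncles\<close>

lemma official_iff_funpow: "official \<omega> g b \<longleftrightarrow> (\<exists>n. b = (blk_parent g ^^ n) (win_tip \<omega>))"
  unfolding official_def rtrancl_graph_iff_funpow ..

lemma blk_parent_height_1 [simp]: "blk_parent g (Blk b (Suc 0)) = Base"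
  by (cases b) simp_all

lemma funpow_blk_parent_attacker:
  "1 \<le> N \<Longrightarrow> (blk_parent g ^^ n) (Blk True N) = (if n < N then Blk True (N - n) else Base)"
  by (induction n) auto

lemma official_if_attacker_wins:
  assumes "nH \<omega> < nS \<omega>"
  shows "official \<omega> g b \<longleftrightarrow> b = Base \<or> (\<exists>j. b = Blk True j \<and> 1 \<le> j \<and> j \<le> nS \<omega>)"
proof -
  have "win_tip \<omega> = Blk True (nS \<omega>)" "1 \<le> nS \<omega>"
    using assms by (simp_all add: win_tip_def)
  then have "official \<omega> g b \<longleftrightarrow> (\<exists>n. b = (if n < nS \<omega> then Blk True (nS \<omega> - n) else Base))"
    by (simp add: official_iff_funpow funpow_blk_parent_attacker)
  also have "\<dots> \<longleftrightarrow> b = Base \<or> (\<exists>j. b = Blk True j \<and> 1 \<le> j \<and> j \<le> nS \<omega>)"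
  proof
    assume "b = Base \<or> (\<exists>j. b = Blk True j \<and> 1 \<le> j \<and> j \<le> nS \<omega>)"
    then show "\<exists>n. b = (if n < nS \<omega> then Blk True (nS \<omega> - n) else Base)"
    proof
      assume "b = Base"
      then show ?thesis by (intro exI[of _ "nS \<omega>"]) simp
    next
      assume "\<exists>j. b = Blk True j \<and> 1 \<le> j \<and> j \<le> nS \<omega>"
      then obtain j where "b = Blk True j" "1 \<le> j" "j \<le> nS \<omega>" by blast
      then show ?thesis by (intro exI[of _ "nS \<omega> - j"]) auto
    qed
  qed (auto split: if_splits)
  finally show ?thesis .
qed

lemma uncles_referred_H: "uncles_referred n1 [False] g = 0"
proof -
  have "win_tip [False] = Blk False 1"
    by (simp add: win_tip_def nS_def nH_def)
  then have "official [False] g (Blk False 1)"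
    unfolding official_iff_funpow by (metis funpow_0)
  moreover have "cycle_blocks [False] = {Blk False 1}"
    by (auto simp: cycle_blocks_def nS_def nH_def)
  ultimately show ?thesis
    by (auto simp: uncles_referred_def is_referred_def is_uncle_def)
qed

lemma uncles_referred_SHH:
  assumes "1 \<le> n1"
  shows "uncles_referred n1 [True, False, False] g = 1"
proof -
  let ?\<omega> = "[True, False, False]"
  have tip: "win_tip ?\<omega> = Blk False 2"
    by (simp add: win_tip_def nS_def nH_def)
  have "(blk_parent g ^^ n) (Blk False 2) = (if n = 0 then Blk False 2 else if n = 1 then Blk (g ! 1) 1 else Base)"
    for n by (induction n) auto
  then have official: "official ?\<omega> g b \<longleftrightarrow> b = Blk False 2 \<or> b = Blk (g ! 1) 1 \<or> b = Base" for b
    unfolding official_iff_funpow tip by (auto intro: exI[of _ 0] exI[of _ 1] exI[of _ 2])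
  have mined: "mined_time ?\<omega> (Blk True 1) = 0" "mined_time ?\<omega> (Blk False 1) = 1" "mined_time ?\<omega> (Blk False 2) = 2"
    by (rule mined_time_eqI; simp)+
  have blocks: "cycle_blocks ?\<omega> = {Blk True 1, Blk False 1, Blk False 2}"
    by (auto simp: cycle_blocks_def nS_def nH_def)
  have uncle: "is_uncle ?\<omega> g b \<longleftrightarrow> b = Blk (\<not> g ! 1) 1" for b
    unfolding is_uncle_def blocks official by (cases "g ! 1") auto
  have "pub_time ?\<omega> (Blk b 1) = 1" for b
    by (cases b) (simp_all add: mined mined[unfolded One_nat_def] nH_def)
  then have referred: "is_referred n1 ?\<omega> g (Blk (\<not> g ! 1) 1)"
    unfolding is_referred_def uncle using assms
    by (intro conjI refl disjI1 bexI[of _ "Blk False 2"]) (simp_all add: official mined blocks)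
  have "{b \<in> cycle_blocks ?\<omega>. is_referred n1 ?\<omega> g b} = {Blk (\<not> g ! 1) 1}"
  proof (intro equalityI subsetI)
    fix b assume "b \<in> {b \<in> cycle_blocks ?\<omega>. is_referred n1 ?\<omega> g b}"
    then have "is_uncle ?\<omega> g b" by (simp add: is_referred_def)
    then show "b \<in> {Blk (\<not> g ! 1) 1}" by (simp add: uncle)
  next
    fix b assume "b \<in> {Blk (\<not> g ! 1) 1}"
    then show "b \<in> {b \<in> cycle_blocks ?\<omega>. is_referred n1 ?\<omega> g b}"
      using referred by (cases "g ! 1") (simp_all add: blocks)
  qed
  then show ?thesis
    by (simp add: uncles_referred_def)
qed

context
  fixes \<omega> g :: "bool list"
  assumes attacker_wins: "nH \<omega> < nS \<omega>"
begin

lemma is_uncle_honest_if_attacker_wins: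
  assumes "1 \<le> h" "h \<le> nH \<omega>"
  shows "is_uncle \<omega> g (Blk False h) \<longleftrightarrow> h = 1 \<or> g ! (h - 1)"
  using assms attacker_wins
  by (auto simp: is_uncle_def cycle_blocks_def official_if_attacker_wins)

lemma not_is_uncle_attacker_if_attacker_wins:
  assumes "1 \<le> j" "j \<le> nS \<omega>"
  shows "\<not> is_uncle \<omega> g (Blk True j)"
  using assms by (simp add: is_uncle_def official_if_attacker_wins[OF attacker_wins])

lemma nephew_in_cycle_iff_if_attacker_wins:
  assumes "1 \<le> h" "h \<le> nH \<omega>"
  defines "a \<equiv> count_list (take (Suc (mined_time \<omega> (Blk False h))) \<omega>) True"
  shows "(\<exists>k \<in> cycle_blocks \<omega>. official \<omega> g k \<and> pub_time \<omega> (Blk False h) < mined_time \<omega> k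
           \<and> h < blk_height k \<and> blk_height k \<le> h + n1)
    \<longleftrightarrow> (\<exists>j. a < j \<and> h < j \<and> j \<le> nS \<omega> \<and> j \<le> h + n1)"
proof -
  define t where "t = mined_time \<omega> (Blk False h)"
  have t: "t < length \<omega>" "\<omega> ! t = False"
    using mined_time_Blk[of h \<omega> False] assms unfolding t_def nH_eq_count_list by auto
  have later: "t < mined_time \<omega> (Blk True j) \<longleftrightarrow> a < j" if "j \<in> {1..nS \<omega>}" for j
    using mined_before_attacker_block_iff[of j \<omega> t] that t by (simp add: a_def t_def nS_eq_count_list)
  have official_blocks: "{k \<in> cycle_blocks \<omega>. official \<omega> g k} = Blk True ` {1..nS \<omega>}"
    unfolding official_if_attacker_wins[OF attacker_wins] cycle_blocks_def by force
  have "(\<exists>k \<in> cycle_blocks \<omega>. official \<omega> g k \<and> Q k) \<longleftrightarrow> (\<exists>j \<in> {1..nS \<omega>}. Q (Blk True j))" for Q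
  proof -
    have "(\<exists>k \<in> cycle_blocks \<omega>. official \<omega> g k \<and> Q k) \<longleftrightarrow> (\<exists>k \<in> {k \<in> cycle_blocks \<omega>. official \<omega> g k}. Q k)"
      by blast
    then show ?thesis unfolding official_blocks by blast
  qed
  then have "(\<exists>k \<in> cycle_blocks \<omega>. official \<omega> g k \<and> pub_time \<omega> (Blk False h) < mined_time \<omega> k
           \<and> h < blk_height k \<and> blk_height k \<le> h + n1)
    \<longleftrightarrow> (\<exists>j \<in> {1..nS \<omega>}. t < mined_time \<omega> (Blk True j) \<and> h < j \<and> j \<le> h + n1)"
    unfolding t_def by simp
  also have "\<dots> \<longleftrightarrow> (\<exists>j \<in> {1..nS \<omega>}. a < j \<and> h < j \<and> j \<le> h + n1)"
    using later by (intro bex_cong) auto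
  also have "\<dots> \<longleftrightarrow> (\<exists>j. a < j \<and> h < j \<and> j \<le> nS \<omega> \<and> j \<le> h + n1)"
    using assms(1) by auto
  finally show ?thesis .
qed

lemma is_referred_honest_if_attacker_wins:
  assumes "1 \<le> h" "h \<le> nH \<omega>" "1 \<le> n1"
  shows "is_referred n1 \<omega> g (Blk False h) \<longleftrightarrow>
    (h = 1 \<or> g ! (h - 1)) \<and> count_list (take (Suc (mined_time \<omega> (Blk False h))) \<omega>) True < h + n1"
proof -
  define a where "a = count_list (take (Suc (mined_time \<omega> (Blk False h))) \<omega>) True"
  have "a \<le> nS \<omega>"
    unfolding a_def nS_eq_count_list by (rule count_list_take_le)
  then have "(\<exists>j. a < j \<and> h < j \<and> j \<le> nS \<omega> \<and> j \<le> h + n1) \<or> nS \<omega> + 1 \<le> h + n1 \<longleftrightarrow> a < h + n1"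
    using assms attacker_wins by presburger
  moreover have "blk_height (win_tip \<omega>) = nS \<omega>"
    using attacker_wins by (simp add: win_tip_def)
  ultimately show ?thesis
    using nephew_in_cycle_iff_if_attacker_wins[OF assms(1,2), of n1]
    by (simp add: is_referred_def is_uncle_honest_if_attacker_wins[OF assms(1,2)] a_def)
qed

lemma uncles_referred_if_attacker_wins:
  assumes "1 \<le> n1"
  shows "uncles_referred n1 \<omega> g = card {h \<in> {1..nH \<omega>}. (h = 1 \<or> g ! (h - 1))
    \<and> count_list (take (Suc (mined_time \<omega> (Blk False h))) \<omega>) True < h + n1}"
proof -
  have "{b \<in> cycle_blocks \<omega>. is_referred n1 \<omega> g b} = Blk False ` {h \<in> {1..nH \<omega>}. (h = 1 \<or> g ! (h - 1))
    \<and> count_list (take (Suc (mined_time \<omega> (Blk False h))) \<omega>) True < h + n1}"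
    using not_is_uncle_attacker_if_attacker_wins is_referred_honest_if_attacker_wins[OF _ _ assms]
    by (auto simp: cycle_blocks_def dest: is_referred_def[THEN iffD1, THEN conjunct1])
  then show ?thesis
    unfolding uncles_referred_def by (simp add: card_image inj_on_def)
qed

end

section \<open>Averaging over the competition flags\<close>

definition expected_uncles_referred :: "nat \<Rightarrow> real \<Rightarrow> bool list \<Rightarrow> real" where
  "expected_uncles_referred n1 \<gamma> \<omega> = (\<Sum>g | length g = nH \<omega>. flags_prob \<gamma> g * real (uncles_referred n1 \<omega> g))"

lemma flags_prob_Cons: "flags_prob \<gamma> (b # g) = (if b then \<gamma> else 1 - \<gamma>) * flags_prob \<gamma> g"
  by (simp add: flags_prob_def)

lemma flags_prob_nonneg: "0 \<le> \<gamma> \<Longrightarrow> \<gamma> \<le> 1 \<Longrightarrow> 0 \<le> flags_prob \<gamma> g"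
  by (induction g) (auto simp: flags_prob_def)

lemma sum_flags_prob: "(\<Sum>g | length g = n. flags_prob \<gamma> g) = 1"
proof (induction n)
  case 0
  then show ?case by (simp add: flags_prob_def)
next
  case (Suc n)
  then show ?case
    by (simp add: sum_lists_length_Suc flags_prob_Cons sum.distrib algebra_simps flip: sum_distrib_left)
qed

lemma sum_flags_prob_nth: "i < n \<Longrightarrow> (\<Sum>g | length g = n. if g ! i then flags_prob \<gamma> g else 0) = \<gamma>"
proof (induction n arbitrary: i)
  case (Suc n)
  show ?case
  proof (cases i)
    case 0
    then show ?thesis
      by (simp add: sum_lists_length_Suc flags_prob_Cons sum_flags_prob flip: sum_distrib_left)
  next
    case (Suc j)
    have "(if b then flags_prob \<gamma> (True # g) else 0) + (if b then flags_prob \<gamma> (False # g) else 0)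
      = (if b then flags_prob \<gamma> g else 0)" for b g
      by (simp add: flags_prob_Cons algebra_simps)
    then show ?thesis
      using Suc.IH[of j] Suc.prems by (simp add: sum_lists_length_Suc \<open>i = Suc j\<close> flip: sum.distrib)
  qed
qed simp

lemma expected_card_flagged:
  "(\<Sum>g | length g = N. flags_prob \<gamma> g * real (card {h \<in> {1..N}. (h = 1 \<or> g ! (h - 1)) \<and> R h}))
    = (\<Sum>h \<in> {1..N}. if R h then (if h = 1 then 1 else \<gamma>) else 0)"
proof -
  have "(\<Sum>g | length g = N. flags_prob \<gamma> g * real (card {h \<in> {1..N}. (h = 1 \<or> g ! (h - 1)) \<and> R h}))
     = (\<Sum>h \<in> {1..N}. \<Sum>g | length g = N. if (h = 1 \<or> g ! (h - 1)) \<and> R h then flags_prob \<gamma> g else 0)"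
  proof -
    have "real (card {h \<in> {1..N}. (h = 1 \<or> g ! (h - 1)) \<and> R h})
      = (\<Sum>h \<in> {1..N}. if (h = 1 \<or> g ! (h - 1)) \<and> R h then 1 else 0)" for g :: "bool list"
      by (simp add: sum.inter_filter[symmetric])
    then show ?thesis
      by (simp add: sum_distrib_left if_distrib[of "(*) _"] cong: if_cong) (rule sum.swap)
  qed
  also have "\<dots> = (\<Sum>h \<in> {1..N}. if R h then (if h = 1 then 1 else \<gamma>) else 0)"
    by (rule sum.cong) (auto simp: sum_flags_prob sum_flags_prob_nth)
  finally show ?thesis .
qed

lemma sum_honest_heights_eq_sum_positions:
  "(\<Sum>h \<in> {1..count_list w False}. F h (mined_time w (Blk False h)))
   = (\<Sum>i < length w. if w ! i = False then F (count_list (take (Suc i) w) False) i else 0)"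
proof -
  have "(\<Sum>i < length w. if w ! i = False then F (count_list (take (Suc i) w) False) i else 0)
     = (\<Sum>i \<in> {i. i < length w \<and> w ! i = False}. F (count_list (take (Suc i) w) False) i)"
    by (simp add: sum.inter_filter[symmetric] lessThan_def conj_commute)
  also have "\<dots> = (\<Sum>h \<in> {1..count_list w False}. F h (mined_time w (Blk False h)))"
  proof (rule sum.reindex_bij_witness[where i = "\<lambda>h. mined_time w (Blk False h)"
        and j = "\<lambda>i. count_list (take (Suc i) w) False"])
    fix i assume i: "i \<in> {i. i < length w \<and> w ! i = False}"
    then show "mined_time w (Blk False (count_list (take (Suc i) w) False)) = i"
      by (auto intro: mined_time_eqI)
    then show "F (count_list (take (Suc i) w) False) (mined_time w (Blk False (count_list (take (Suc i) w) False)))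
      = F (count_list (take (Suc i) w) False) i"
      by simp
    show "count_list (take (Suc i) w) False \<in> {1..count_list w False}"
      using i count_list_take_le[of "Suc i" w False] by (auto simp: count_list_take_Suc)
  qed (use mined_time_Blk[of _ w False] in auto)
  finally show ?thesis by simp
qed

lemma expected_uncles_referred_H: "expected_uncles_referred n1 \<gamma> [False] = 0"
  by (simp add: expected_uncles_referred_def uncles_referred_H)

lemma expected_uncles_referred_SHH: "1 \<le> n1 \<Longrightarrow> expected_uncles_referred n1 \<gamma> [True, False, False] = 1"
  by (simp add: expected_uncles_referred_def uncles_referred_SHH sum_flags_prob)

definition balance :: "bool list \<Rightarrow> int" where
  "balance w = int (count_list w True) - int (count_list w False)"

lemma balance_Nil [simp]: "balance [] = 0"
  and balance_Cons [simp]: "balance (b # w) = (if b then 1 else - 1) + balance w"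
  and balance_append [simp]: "balance (u @ v) = balance u + balance v"
  by (simp_all add: balance_def)

text \<open>The argument \<open>l\<close> is the attacker's lead (his blocks minus honest blocks) before the word
  is read.  An honest block is counted when the lead just after it is below \<open>n1\<close>: then some official
  block at most \<open>n1\<close> levels above it is mined later (possibly in a later cycle) and can refer it.\<close>

fun referable_count :: "nat \<Rightarrow> int \<Rightarrow> bool list \<Rightarrow> real" where
  "referable_count n1 l [] = 0"
| "referable_count n1 l (True # w) = referable_count n1 (l + 1) w"
| "referable_count n1 l (False # w) = (if l - 1 < int n1 then 1 else 0) + referable_count n1 (l - 1) w"

fun first_referable :: "nat \<Rightarrow> int \<Rightarrow> bool list \<Rightarrow> real" where
  "first_referable n1 l [] = 0"
| "first_referable n1 l (True # w) = first_referable n1 (l + 1) w"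
| "first_referable n1 l (False # w) = (if l - 1 < int n1 then 1 else 0)"

lemma referable_count_eq_sum:
  "referable_count n1 l w =
    (\<Sum>i < length w. if w ! i = False \<and> l + balance (take (Suc i) w) < int n1 then 1 else 0)"
proof (induction w arbitrary: l)
  case (Cons b w)
  then show ?case
    unfolding length_Cons sum.lessThan_Suc_shift by (cases b) (simp_all add: algebra_simps)
qed simp

lemma first_referable_eq_sum:
  "first_referable n1 l w =
    (\<Sum>i < length w. if w ! i = False \<and> count_list (take (Suc i) w) False = 1
       \<and> l + balance (take (Suc i) w) < int n1 then 1 else 0)"
proof (induction w arbitrary: l)
  case (Cons b w)
  show ?case
  proof (cases b)
    case True
    with Cons show ?thesis
      unfolding length_Cons sum.lessThan_Suc_shift by (simp add: algebra_simps)
  next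
    case False
    have "count_list (take (Suc i) w) False \<noteq> 0" if "i < length w" "w ! i = False" for i
      using that by (simp add: count_list_take_Suc)
    with False show ?thesis
      unfolding length_Cons sum.lessThan_Suc_shift by (force intro!: sum.neutral)
  qed
qed simp

lemma referable_count_nonneg: "0 \<le> referable_count n1 l w"
  by (induction n1 l w rule: referable_count.induct) auto

lemma first_referable_nonneg: "0 \<le> first_referable n1 l w"
  and first_referable_le_1: "first_referable n1 l w \<le> 1"
  by (induction n1 l w rule: first_referable.induct) auto

lemma referable_count_append:
  "dyck u \<Longrightarrow> referable_count n1 l (u @ w) = referable_count n1 l u + referable_count n1 l w"
  by (induction u arbitrary: l w rule: dyck.induct) (simp_all add: algebra_simps)

lemma first_referable_append:
  "dyck u \<Longrightarrow> first_referable n1 l (u @ w) = (if u = [] then first_referable n1 l w else first_referable n1 l u)"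
  by (induction u arbitrary: l w rule: dyck.induct) simp_all

lemma referable_count_eq_0: "dyck w \<Longrightarrow> int n1 \<le> l \<Longrightarrow> referable_count n1 l w = 0"
  by (induction w arbitrary: l rule: dyck.induct) (simp_all add: referable_count_append)

lemma first_referable_eq_0: "int n1 < l \<Longrightarrow> first_referable n1 l w = 0"
  by (induction n1 l w rule: first_referable.induct) auto

lemma expected_uncles_if_attacker_wins:
  assumes "nH \<omega> < nS \<omega>" "1 \<le> n1"
  shows "expected_uncles_referred n1 \<gamma> \<omega> = \<gamma> * referable_count n1 0 \<omega> + (1 - \<gamma>) * first_referable n1 0 \<omega>"
proof -
  define weight where "weight h t =
    (if count_list (take (Suc t) \<omega>) True < h + n1 then if h = 1 then 1 else \<gamma> else 0 :: real)" for h t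
  have "expected_uncles_referred n1 \<gamma> \<omega>
    = (\<Sum>h \<in> {1..count_list \<omega> False}. weight h (mined_time \<omega> (Blk False h)))"
    unfolding expected_uncles_referred_def uncles_referred_if_attacker_wins[OF assms] expected_card_flagged
    by (simp add: weight_def nH_eq_count_list)
  also have "\<dots> = (\<Sum>i < length \<omega>. if \<omega> ! i = False then weight (count_list (take (Suc i) \<omega>) False) i else 0)"
    by (rule sum_honest_heights_eq_sum_positions)
  also have "\<dots> = \<gamma> * referable_count n1 0 \<omega> + (1 - \<gamma>) * first_referable n1 0 \<omega>"
    unfolding referable_count_eq_sum first_referable_eq_sum sum_distrib_left sum.distrib[symmetric]
    by (rule sum.cong) (auto simp: weight_def balance_def)
  finally show ?thesis .
qed

lemma expected_uncles_referred_SHS: "1 \<le> n1 \<Longrightarrow> expected_uncles_referred n1 \<gamma> [True, False, True] = 1"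
  by (subst expected_uncles_if_attacker_wins) (simp_all add: nS_def nH_def algebra_simps)

section \<open>Dyck words and sums over them\<close>

lemma dyck_balance: "dyck w \<Longrightarrow> balance w = 0"
  by (induction rule: dyck.induct) simp_all

lemma dyck_balance_take_nonneg: "dyck w \<Longrightarrow> 0 \<le> balance (take k w)"
proof (induction w arbitrary: k rule: dyck.induct)
  case (dyck_step u v)
  show ?case
  proof (cases "k \<le> Suc (length u)")
    case True
    then show ?thesis
      using dyck_step.IH(1)[of "k - 1"] by (cases k) simp_all
  next
    case False
    then obtain m where "k = Suc (Suc (length u) + m)"
      using less_imp_Suc_add not_le by blast
    then show ?thesis
      using dyck_step.IH(2)[of m] dyck_balance[OF dyck_step.hyps(1)] by simp
  qed
qed simp

lemma dyck_split_unique: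
  assumes "dyck u" "dyck u'" "u @ False # v = u' @ False # v'"
  shows "u = u'" "v = v'"
proof -
  have no_shorter: False if "dyck x" "dyck y" "x @ False # r = y @ False # s" "length x < length y"
    for x y r s
  proof -
    have "x @ [False] = take (Suc (length x)) (x @ False # r)"
      by simp
    also have "\<dots> = take (Suc (length x)) (y @ False # s)"
      using that(3) by (rule arg_cong)
    also have "\<dots> = take (Suc (length x)) y"
      using that(4) by simp
    finally have "take (Suc (length x)) y = x @ [False]" ..
    then have "balance (take (Suc (length x)) y) = -1"
      using dyck_balance[OF that(1)] by simp
    with dyck_balance_take_nonneg[OF that(2), of "Suc (length x)"] show False
      by simp
  qed
  have "length u = length u'"
    using no_shorter[OF assms] no_shorter[OF assms(2,1) assms(3)[symmetric]] by fastforce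
  with assms(3) show "u = u'" "v = v'" by simp_all
qed

definition dyck_words :: "bool list set" where
  "dyck_words = {w. dyck w}"

definition dyck_words_shorter :: "nat \<Rightarrow> bool list set" where
  "dyck_words_shorter n = {w. dyck w \<and> length w < n}"

abbreviation dyck_join :: "bool list \<Rightarrow> bool list \<Rightarrow> bool list" where
  "dyck_join u v \<equiv> True # u @ False # v"

lemma Nil_in_dyck_words [simp]: "[] \<in> dyck_words"
  by (simp add: dyck_words_def dyck_Nil)

lemma inj_on_dyck_join: "inj_on (\<lambda>(u, v). dyck_join u v) (dyck_words \<times> dyck_words)"
  by (auto simp: inj_on_def dyck_words_def dest: dyck_split_unique)

lemma dyck_words_minus_Nil: "dyck_words - {[]} = (\<lambda>(u, v). dyck_join u v) ` (dyck_words \<times> dyck_words)"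
  by (auto simp: dyck_words_def dyck_step elim: dyck.cases)

lemma finite_dyck_words_shorter: "finite (dyck_words_shorter n)"
  by (rule finite_subset[OF _ finite_lists_length_le[of UNIV n]]) (auto simp: dyck_words_shorter_def)

lemma dyck_words_shorter_subset: "dyck_words_shorter n \<subseteq> dyck_words"
  by (auto simp: dyck_words_shorter_def dyck_words_def)

lemma finite_subset_dyck_words_shorter:
  assumes "finite F" "F \<subseteq> dyck_words"
  obtains n where "F \<subseteq> dyck_words_shorter n"
proof
  show "F \<subseteq> dyck_words_shorter (Suc (\<Sum>w \<in> F. length w))"
    using assms member_le_sum[of _ F length] by (fastforce simp: dyck_words_shorter_def dyck_words_def)
qed

lemma sum_dyck_words_shorter_Suc_le:
  fixes h :: "bool list \<Rightarrow> real"
  assumes "\<And>w. w \<in> dyck_words \<Longrightarrow> 0 \<le> h w"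
  shows "sum h (dyck_words_shorter (Suc n))
    \<le> h [] + (\<Sum>u \<in> dyck_words_shorter n. \<Sum>v \<in> dyck_words_shorter n. h (dyck_join u v))"
proof -
  let ?J = "(\<lambda>(u, v). dyck_join u v) ` (dyck_words_shorter n \<times> dyck_words_shorter n)"
  have "dyck_words_shorter (Suc n) \<subseteq> insert [] ?J"
  proof
    fix w assume "w \<in> dyck_words_shorter (Suc n)"
    then have "dyck w" "length w < Suc n" by (simp_all add: dyck_words_shorter_def)
    then show "w \<in> insert [] ?J"
    proof cases
      case (dyck_step u v)
      with \<open>length w < Suc n\<close> have "(u, v) \<in> dyck_words_shorter n \<times> dyck_words_shorter n"
        by (simp add: dyck_words_shorter_def)
      then show ?thesis by (auto simp: dyck_step(1))
    qed simp
  qed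
  moreover have "insert [] ?J \<subseteq> dyck_words"
    by (auto simp: dyck_words_shorter_def dyck_words_def intro: dyck.intros)
  ultimately have "sum h (dyck_words_shorter (Suc n)) \<le> sum h (insert [] ?J)"
    using assms finite_dyck_words_shorter by (intro sum_mono2) blast+
  also have "\<dots> = h [] + sum h ?J"
    using finite_dyck_words_shorter by (subst sum.insert) auto
  also have "sum h ?J = (\<Sum>(u, v) \<in> dyck_words_shorter n \<times> dyck_words_shorter n. h (dyck_join u v))"
  proof -
    have "inj_on (\<lambda>(u, v). dyck_join u v) (dyck_words_shorter n \<times> dyck_words_shorter n)"
      using dyck_words_shorter_subset by (blast intro: inj_on_subset[OF inj_on_dyck_join])
    then show ?thesis by (simp add: sum.reindex o_def split_def)
  qed
  also have "\<dots> = (\<Sum>u \<in> dyck_words_shorter n. \<Sum>v \<in> dyck_words_shorter n. h (dyck_join u v))"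
    by (simp add: sum.cartesian_product)
  finally show ?thesis by simp
qed

lemma summable_on_dyck_words_bounded:
  fixes h :: "bool list \<Rightarrow> real"
  assumes "\<And>w. w \<in> dyck_words \<Longrightarrow> 0 \<le> h w" "\<And>n. sum h (dyck_words_shorter n) \<le> B"
  shows "h summable_on dyck_words" "infsum h dyck_words \<le> B"
proof -
  have finite_sums: "sum h F \<le> B" if F: "finite F" "F \<subseteq> dyck_words" for F
  proof -
    obtain n where n: "F \<subseteq> dyck_words_shorter n"
      using finite_subset_dyck_words_shorter[OF F] by blast
    have "sum h F \<le> sum h (dyck_words_shorter n)"
      using assms(1) dyck_words_shorter_subset by (intro sum_mono2[OF finite_dyck_words_shorter n]) auto
    also have "\<dots> \<le> B" by (rule assms(2))
    finally show ?thesis .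
  qed
  show summable: "h summable_on dyck_words"
    using assms(1) finite_sums by (intro nonneg_bdd_above_summable_on bdd_aboveI) auto
  show "infsum h dyck_words \<le> B"
    using infsum_le_finite_sums[OF summable] finite_sums by blast
qed

lemma has_sum_dyck_join:
  fixes h :: "bool list \<Rightarrow> real"
  assumes "h summable_on dyck_words"
  shows "((\<lambda>(u, v). h (dyck_join u v)) has_sum (infsum h dyck_words - h [])) (dyck_words \<times> dyck_words)"
proof -
  have summable: "h summable_on (dyck_words - {[]})"
    using assms by (rule summable_on_subset_banach) auto
  then have "(h has_sum (h [] + infsum h (dyck_words - {[]}))) dyck_words"
    using has_sum_insert[of "[]" "dyck_words - {[]}" h] by (simp add: insert_absorb has_sum_infsum)
  then have "infsum h (dyck_words - {[]}) = infsum h dyck_words - h []"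
    by (simp add: infsumI)
  with summable have "(h has_sum (infsum h dyck_words - h [])) (dyck_words - {[]})"
    by (metis has_sum_infsum)
  then show ?thesis
    unfolding dyck_words_minus_Nil has_sum_reindex[OF inj_on_dyck_join] by (simp add: o_def split_def)
qed

lemma has_sum_indicator_Nil_dyck_words: "((\<lambda>w. if w = [] then c else 0) has_sum (c :: real)) dyck_words"
  by (rule has_sum_finite_neutralI[of "{[]}"]) auto

lemma infsum_dyck_words_eq_products:
  fixes h f1 g1 f2 g2 :: "bool list \<Rightarrow> real"
  assumes "h summable_on dyck_words"
    and "(f1 has_sum a1) dyck_words" "(g1 has_sum b1) dyck_words"
    and "(f2 has_sum a2) dyck_words" "(g2 has_sum b2) dyck_words"
    and "\<And>w. w \<in> dyck_words \<Longrightarrow> 0 \<le> f1 w \<and> 0 \<le> g1 w \<and> 0 \<le> f2 w \<and> 0 \<le> g2 w"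
    and "\<And>u v. u \<in> dyck_words \<Longrightarrow> v \<in> dyck_words \<Longrightarrow> h (dyck_join u v) = f1 u * g1 v + f2 u * g2 v"
  shows "infsum h dyck_words = h [] + a1 * b1 + a2 * b2"
proof -
  have "((\<lambda>x. (\<lambda>(u, v). f1 u * g1 v) x + (\<lambda>(u, v). f2 u * g2 v) x) has_sum (a1 * b1 + a2 * b2))
      (dyck_words \<times> dyck_words)"
    using assms(2-6) by (intro has_sum_add has_sum_product_nonneg) auto
  then have "((\<lambda>(u, v). h (dyck_join u v)) has_sum (a1 * b1 + a2 * b2)) (dyck_words \<times> dyck_words)"
    by (rule has_sum_cong[THEN iffD1, rotated]) (auto simp: assms(7))
  then have "infsum h dyck_words - h [] = a1 * b1 + a2 * b2"
    by (rule has_sum_unique[OF has_sum_dyck_join[OF assms(1)]])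
  then show ?thesis by simp
qed

lemma cycle_prob_Nil [simp]: "cycle_prob p q [] = 1"
  by (simp add: cycle_prob_def nS_def nH_def)

lemma cycle_prob_dyck_join: "cycle_prob p q (dyck_join u v) = q * p * (cycle_prob p q u * cycle_prob p q v)"
  by (simp add: cycle_prob_def nS_def nH_def power_add)

lemma cycle_prob_nonneg: "0 \<le> q \<Longrightarrow> 0 \<le> p \<Longrightarrow> 0 \<le> cycle_prob p q w"
  by (simp add: cycle_prob_def)

lemma sum_sum_dyck_join_referable_count:
  assumes "D \<subseteq> dyck_words"
  shows "(\<Sum>u \<in> D. \<Sum>v \<in> D. cycle_prob p q (dyck_join u v) * referable_count n1 l (dyck_join u v))
    = q * p * ((\<Sum>u \<in> D. cycle_prob p q u * referable_count n1 (l + 1) u) * sum (cycle_prob p q) D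
        + (if l < int n1 then 1 else 0) * sum (cycle_prob p q) D * sum (cycle_prob p q) D
        + sum (cycle_prob p q) D * (\<Sum>v \<in> D. cycle_prob p q v * referable_count n1 l v))"
proof -
  let ?c = "if l < int n1 then 1 else 0 :: real"
  have "(\<Sum>u \<in> D. \<Sum>v \<in> D. cycle_prob p q (dyck_join u v) * referable_count n1 l (dyck_join u v))
    = (\<Sum>u \<in> D. \<Sum>v \<in> D. (q * p * (cycle_prob p q u * referable_count n1 (l + 1) u)) * cycle_prob p q v
        + (q * p * ?c * cycle_prob p q u) * cycle_prob p q v
        + (q * p * cycle_prob p q u) * (cycle_prob p q v * referable_count n1 l v))"
    using assms
    by (intro sum.cong refl) (auto simp: dyck_words_def cycle_prob_dyck_join referable_count_append algebra_simps)
  also have "\<dots> = (\<Sum>u \<in> D. q * p * (cycle_prob p q u * referable_count n1 (l + 1) u)) * sum (cycle_prob p q) D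
      + (\<Sum>u \<in> D. q * p * ?c * cycle_prob p q u) * sum (cycle_prob p q) D
      + (\<Sum>u \<in> D. q * p * cycle_prob p q u) * (\<Sum>v \<in> D. cycle_prob p q v * referable_count n1 l v)"
    by (simp only: sum.distrib sum_product)
  also have "\<dots> = q * p * ((\<Sum>u \<in> D. cycle_prob p q u * referable_count n1 (l + 1) u) * sum (cycle_prob p q) D
        + ?c * sum (cycle_prob p q) D * sum (cycle_prob p q) D
        + sum (cycle_prob p q) D * (\<Sum>v \<in> D. cycle_prob p q v * referable_count n1 l v))"
    by (simp only: sum_distrib_left[symmetric]) (simp add: algebra_simps)
  finally show ?thesis .
qed

context
  fixes p q :: real
  assumes q_pos: "0 < q" and q_less_p: "q < p" and p_plus_q: "p + q = 1"
begin

lemma sum_cycle_prob_dyck_words_shorter_le: "sum (cycle_prob p q) (dyck_words_shorter n) \<le> 1 / p"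
proof (induction n)
  case 0
  then show ?case using q_less_p q_pos by (simp add: dyck_words_shorter_def)
next
  case (Suc n)
  let ?C = "sum (cycle_prob p q) (dyck_words_shorter n)"
  have "(\<Sum>u \<in> dyck_words_shorter n. \<Sum>v \<in> dyck_words_shorter n. cycle_prob p q (dyck_join u v))
    = q * p * (?C * ?C)"
    unfolding sum_product by (simp add: cycle_prob_dyck_join sum_distrib_left)
  then have "sum (cycle_prob p q) (dyck_words_shorter (Suc n)) \<le> 1 + q * p * (?C * ?C)"
    using sum_dyck_words_shorter_Suc_le[of "cycle_prob p q" n] q_pos q_less_p
    by (simp add: cycle_prob_nonneg)
  also have "\<dots> \<le> 1 + q * p * (1 / p * (1 / p))"
    using Suc q_pos q_less_p
    by (intro add_left_mono mult_left_mono mult_mono) (auto intro!: sum_nonneg cycle_prob_nonneg)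
  also have "\<dots> = 1 / p"
    using q_pos q_less_p p_plus_q by (simp add: field_simps)
  finally show ?case .
qed

lemma has_sum_cycle_prob_dyck_words: "(cycle_prob p q has_sum 1 / p) dyck_words"
proof -
  have nonneg: "0 \<le> cycle_prob p q w" for w
    using q_pos q_less_p by (simp add: cycle_prob_nonneg)
  define C where "C = infsum (cycle_prob p q) dyck_words"
  have summable: "cycle_prob p q summable_on dyck_words" and "C \<le> 1 / p"
    using summable_on_dyck_words_bounded[of "cycle_prob p q", OF nonneg sum_cycle_prob_dyck_words_shorter_le]
    by (simp_all add: C_def)
  then have hC: "(cycle_prob p q has_sum C) dyck_words"
    by (simp add: C_def has_sum_infsum)
  have "C = cycle_prob p q [] + (q * p * C) * C + 0 * 0"
    by (rule infsum_dyck_words_eq_products[OF summable has_sum_cmult_right[OF hC] hC has_sum_0_simp has_sum_0_simp,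
          folded C_def])
      (use nonneg q_pos q_less_p in \<open>auto simp: cycle_prob_dyck_join\<close>)
  then have "C = 1 + q * p * C * C"
    by simp
  \<comment> \<open>Of the two roots 1/p and 1/q of this quadratic, only 1/p respects the bound C \<le> 1/p.\<close>
  then have "(p * C - 1) * (q * C - 1) = 0"
    using p_plus_q by (simp add: algebra_simps) (metis distrib_left mult.commute mult_1)
  moreover have "q * C \<noteq> 1"
  proof
    assume "q * C = 1"
    then have "C = 1 / q" using q_pos by (simp add: field_simps)
    moreover have "1 / p < 1 / q" using q_pos q_less_p by (simp add: frac_less2)
    ultimately show False using \<open>C \<le> 1 / p\<close> by simp
  qed
  ultimately have "p * C - 1 = 0"
    by (simp only: mult_eq_0_iff) simp
  then have "C = 1 / p"
    using q_less_p q_pos by (simp add: field_simps)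
  with hC show ?thesis by simp
qed

lemma sum_referable_count_dyck_words_shorter_le:
  "(\<Sum>w \<in> dyck_words_shorter n. cycle_prob p q w * referable_count n1 l w) \<le> q / (p * (p - q))"
proof -
  define K where "K = q / (p * (p - q))"
  have "p \<noteq> 0" "p - q \<noteq> 0"
    using q_pos q_less_p by simp_all
  then have K_eq: "K * (p - q) = q / p"
    by (simp add: K_def)
  have "q * p * (K * (1 / p) + 1 * (1 / p) * (1 / p) + 1 / p * K) = 2 * q * K + q / p"
    using \<open>p \<noteq> 0\<close> by (simp add: field_simps)
  also have "\<dots> = K * (p + q)"
    unfolding K_eq[symmetric] by (simp add: algebra_simps)
  finally have K: "q * p * (K * (1 / p) + 1 * (1 / p) * (1 / p) + 1 / p * K) = K"
    using p_plus_q by simp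
  have nonneg: "0 \<le> cycle_prob p q w * referable_count n1 l w" for w l
    using q_pos q_less_p by (simp add: cycle_prob_nonneg referable_count_nonneg)
  have "(\<Sum>w \<in> dyck_words_shorter n. cycle_prob p q w * referable_count n1 l w) \<le> K" for l
  proof (induction n arbitrary: l)
    case 0
    then show ?case using q_pos q_less_p by (simp add: dyck_words_shorter_def K_def)
  next
    case (Suc n)
    let ?D = "dyck_words_shorter n"
    let ?C = "sum (cycle_prob p q) ?D"
    let ?A = "\<lambda>l. \<Sum>w \<in> ?D. cycle_prob p q w * referable_count n1 l w"
    have "(\<Sum>u \<in> ?D. \<Sum>v \<in> ?D. cycle_prob p q (dyck_join u v) * referable_count n1 l (dyck_join u v))
      = q * p * (?A (l + 1) * ?C + (if l < int n1 then 1 else 0) * ?C * ?C + ?C * ?A l)"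
      using dyck_words_shorter_subset by (rule sum_sum_dyck_join_referable_count)
    also have "\<dots> \<le> q * p * (K * (1 / p) + 1 * (1 / p) * (1 / p) + 1 / p * K)"
    proof -
      have "0 \<le> ?C" "0 \<le> ?A l" "0 \<le> ?A (l + 1)" "0 \<le> K"
        using nonneg q_pos q_less_p by (auto intro!: sum_nonneg cycle_prob_nonneg simp: K_def)
      then show ?thesis
        using Suc.IH sum_cycle_prob_dyck_words_shorter_le[of n] q_pos q_less_p
        by (intro mult_left_mono add_mono mult_mono) auto
    qed
    finally show ?case
      using sum_dyck_words_shorter_Suc_le[of "\<lambda>w. cycle_prob p q w * referable_count n1 l w" n] nonneg K
      by simp
  qed
  then show ?thesis
    by (simp add: K_def)
qed

lemma summable_referable_count: "(\<lambda>w. cycle_prob p q w * referable_count n1 l w) summable_on dyck_words"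
  using q_pos q_less_p sum_referable_count_dyck_words_shorter_le
  by (intro summable_on_dyck_words_bounded(1)) (auto simp: cycle_prob_nonneg referable_count_nonneg)

lemma infsum_referable_count_recurrence:
  fixes n1 :: nat
  defines "S \<equiv> \<lambda>l. infsum (\<lambda>w. cycle_prob p q w * referable_count n1 l w) dyck_words"
  shows "p * S l = q * S (l + 1) + (if l < int n1 then q / p else 0)"
proof -
  let ?P = "cycle_prob p q"
  let ?c = "if l < int n1 then 1 else 0 :: real"
  have hS: "((\<lambda>w. ?P w * referable_count n1 l w) has_sum S l) dyck_words" for l
    unfolding S_def by (rule has_sum_infsum[OF summable_referable_count])
  have "((\<lambda>u. q * p * (?P u * referable_count n1 (l + 1) u + ?c * ?P u)) has_sum q * p * (S (l + 1) + ?c * (1 / p)))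
      dyck_words"
    by (intro has_sum_cmult_right has_sum_add hS has_sum_cycle_prob_dyck_words)
  then have "S l = ?P [] * referable_count n1 l [] + (q * p * (S (l + 1) + ?c * (1 / p))) * (1 / p)
      + (q * p * (1 / p)) * S l"
    unfolding S_def
    by (rule infsum_dyck_words_eq_products[OF summable_referable_count _ has_sum_cycle_prob_dyck_words
          has_sum_cmult_right[OF has_sum_cycle_prob_dyck_words] hS[unfolded S_def]])
      (use q_pos q_less_p in \<open>auto simp: dyck_words_def cycle_prob_dyck_join cycle_prob_nonneg
          referable_count_nonneg referable_count_append algebra_simps\<close>)
  moreover have cancel: "q * p * (x + c * (1 / p)) * (1 / p) = q * x + q / p * c" "q * p * (1 / p) * y = q * y"
    for x y c
    using q_pos q_less_p by (simp_all add: field_simps)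
  ultimately have "S l = q * S (l + 1) + q / p * ?c + q * S l"
    by (simp only: cancel referable_count.simps(1) mult_zero_right add_0)
  moreover have "p * S l = (p + q) * S l - q * S l"
    by (simp add: algebra_simps)
  ultimately show ?thesis
    unfolding p_plus_q by auto
qed

lemma has_sum_referable_count:
  "((\<lambda>w. cycle_prob p q w * referable_count n1 l w)
      has_sum q / (p * (p - q)) * (1 - (q / p) ^ nat (int n1 - l))) dyck_words"
proof -
  define S where "S l = infsum (\<lambda>w. cycle_prob p q w * referable_count n1 l w) dyck_words" for l
  define K where "K = q / (p * (p - q))"
  define F where "F l = K * (1 - (q / p) ^ nat (int n1 - l))" for l
  have "S l = F l"
  proof (rule eq_if_backward_recurrence[of n1])
    fix l assume "int n1 \<le> l"
    then show "S l = F l"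
      by (auto simp: S_def F_def referable_count_eq_0 dyck_words_def intro!: infsum_0)
  next
    fix l assume "l < int n1" and IH: "S (l + 1) = F (l + 1)"
    define x where "x = (q / p) ^ nat (int n1 - (l + 1))"
    have "p \<noteq> 0" "p - q \<noteq> 0"
      using q_pos q_less_p by simp_all
    have "nat (int n1 - l) = Suc (nat (int n1 - (l + 1)))"
      using \<open>l < int n1\<close> by simp
    then have "p * F l = q * (K * (1 - x)) + K * (p - q)"
      using \<open>p \<noteq> 0\<close> by (simp add: F_def x_def algebra_simps)
    also have "\<dots> = p * S l"
      using infsum_referable_count_recurrence[of n1 l] IH \<open>l < int n1\<close> \<open>p \<noteq> 0\<close> \<open>p - q \<noteq> 0\<close>
      by (simp add: S_def F_def K_def x_def)
    finally show "S l = F l"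
      using q_pos q_less_p by simp
  qed
  then show ?thesis
    using has_sum_infsum[OF summable_referable_count, of n1 l] by (simp add: S_def F_def K_def)
qed

lemma summable_first_referable: "(\<lambda>w. cycle_prob p q w * first_referable n1 l w) summable_on dyck_words"
proof (rule summable_on_dyck_words_bounded(1))
  show "0 \<le> cycle_prob p q w * first_referable n1 l w" for w
    using q_pos q_less_p by (simp add: cycle_prob_nonneg first_referable_nonneg)
  have "(\<Sum>w \<in> dyck_words_shorter n. cycle_prob p q w * first_referable n1 l w) \<le> sum (cycle_prob p q) (dyck_words_shorter n)"
    for n using q_pos q_less_p first_referable_le_1 by (intro sum_mono) (simp add: cycle_prob_nonneg mult_left_le)
  then show "(\<Sum>w \<in> dyck_words_shorter n. cycle_prob p q w * first_referable n1 l w) \<le> 1 / p" for n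
    using sum_cycle_prob_dyck_words_shorter_le[of n] by (meson order_trans)
qed

lemma infsum_first_referable_recurrence:
  fixes n1 :: nat
  defines "E \<equiv> \<lambda>l. infsum (\<lambda>w. cycle_prob p q w * first_referable n1 l w) dyck_words"
  shows "E l = q * E (l + 1) + (if l < int n1 then q else 0)"
proof -
  let ?P = "cycle_prob p q"
  let ?c = "if l < int n1 then 1 else 0 :: real"
  have hE: "((\<lambda>w. ?P w * first_referable n1 l w) has_sum E l) dyck_words" for l
    unfolding E_def by (rule has_sum_infsum[OF summable_first_referable])
  have "((\<lambda>u. q * p * (?P u * first_referable n1 (l + 1) u + (if u = [] then ?c else 0)))
      has_sum q * p * (E (l + 1) + ?c)) dyck_words"
    by (intro has_sum_cmult_right has_sum_add hE has_sum_indicator_Nil_dyck_words)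
  then have "E l = ?P [] * first_referable n1 l [] + (q * p * (E (l + 1) + ?c)) * (1 / p) + 0 * 0"
    unfolding E_def
    by (rule infsum_dyck_words_eq_products[OF summable_first_referable _ has_sum_cycle_prob_dyck_words
          has_sum_0_simp has_sum_0_simp])
      (use q_pos q_less_p in \<open>auto simp: dyck_words_def cycle_prob_dyck_join cycle_prob_nonneg
          first_referable_nonneg first_referable_append algebra_simps\<close>)
  moreover have cancel: "q * p * (x + c) * (1 / p) = q * x + q * c" for x c
    using q_pos q_less_p by (simp add: field_simps)
  ultimately show ?thesis
    by (simp only: cancel first_referable.simps(1) mult_zero_right add_0 add_0_right) simp
qed

lemma has_sum_first_referable:
  "((\<lambda>w. cycle_prob p q w * first_referable n1 l w) has_sum q * (1 - q ^ nat (int n1 - l)) / p) dyck_words"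
proof -
  define E where "E l = infsum (\<lambda>w. cycle_prob p q w * first_referable n1 l w) dyck_words" for l
  define G where "G l = q * (1 - q ^ nat (int n1 - l)) / p" for l
  have "E l = G l"
  proof (rule eq_if_backward_recurrence[of "int n1 + 1"])
    fix l assume "int n1 + 1 \<le> l"
    then show "E l = G l"
      by (auto simp: E_def G_def first_referable_eq_0 intro!: infsum_0)
  next
    fix l assume "l < int n1 + 1" and IH: "E (l + 1) = G (l + 1)"
    have "G l = q * G (l + 1) + (if l < int n1 then q else 0)"
    proof (cases "l < int n1")
      case True
      define y where "y = q ^ nat (int n1 - (l + 1))"
      have "nat (int n1 - l) = Suc (nat (int n1 - (l + 1)))"
        using True by simp
      then have "G l = q * ((p + q) - q * y) / p"
        using p_plus_q by (simp add: G_def y_def)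
      also have "\<dots> = q * G (l + 1) + q"
        using q_pos q_less_p by (simp add: G_def y_def field_simps)
      finally show ?thesis
        using True by simp
    qed (use \<open>l < int n1 + 1\<close> in \<open>simp add: G_def\<close>)
    with IH show "E l = G l"
      using infsum_first_referable_recurrence[of n1 l] by (simp add: E_def)
  qed
  then show ?thesis
    using has_sum_infsum[OF summable_first_referable, of n1 l] by (simp add: E_def G_def)
qed

end

lemma expected_uncles_referred_SSwH:
  assumes "dyck w" "2 \<le> n1"
  shows "expected_uncles_referred n1 \<gamma> (True # True # w @ [False]) =
    \<gamma> * (referable_count n1 2 w + 1) + (1 - \<gamma>) * ((if w = [] then 1 else 0) + first_referable n1 2 w)"
proof -
  have "nH (True # True # w @ [False]) < nS (True # True # w @ [False])"
    using dyck_balance[OF assms(1)] by (simp add: nS_eq_count_list nH_eq_count_list balance_def)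
  then show ?thesis
    using assms by (simp add: expected_uncles_if_attacker_wins referable_count_append first_referable_append)
qed

lemma cycles_eq: "{\<omega>. is_cycle \<omega>} =
  {[False], [True, False, True], [True, False, False]} \<union> (\<lambda>w. True # True # w @ [False]) ` dyck_words"
  by (auto simp: is_cycle_def dyck_words_def)

lemma has_sum_expected_uncles_referred_SSwH:
  assumes "0 < q" "q < p" "p + q = 1" "2 \<le> n1"
  shows "((\<lambda>w. cycle_prob p q (True # True # w @ [False]) * expected_uncles_referred n1 \<gamma> (True # True # w @ [False]))
    has_sum q\<^sup>2 * p * (\<gamma> * (q / (p * (p - q)) * (1 - (q / p) ^ (n1 - 2)) + 1 / p)
      + (1 - \<gamma>) * (1 + q * (1 - q ^ (n1 - 2)) / p))) dyck_words"
proof -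
  have "nat (int n1 - 2) = n1 - 2" by simp
  then have "((\<lambda>w. q\<^sup>2 * p * (\<gamma> * (cycle_prob p q w * referable_count n1 2 w + cycle_prob p q w)
      + (1 - \<gamma>) * ((if w = [] then 1 else 0) + cycle_prob p q w * first_referable n1 2 w)))
    has_sum q\<^sup>2 * p * (\<gamma> * (q / (p * (p - q)) * (1 - (q / p) ^ (n1 - 2)) + 1 / p)
      + (1 - \<gamma>) * (1 + q * (1 - q ^ (n1 - 2)) / p))) dyck_words"
    using has_sum_referable_count[OF assms(1-3), of n1 2] has_sum_first_referable[OF assms(1-3), of n1 2]
      has_sum_cycle_prob_dyck_words[OF assms(1-3)] has_sum_indicator_Nil_dyck_words[of 1]
    by (intro has_sum_cmult_right has_sum_add) auto
  then show ?thesis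
  proof (rule has_sum_cong[THEN iffD1, rotated])
    fix w assume "w \<in> dyck_words"
    then show "q\<^sup>2 * p * (\<gamma> * (cycle_prob p q w * referable_count n1 2 w + cycle_prob p q w)
      + (1 - \<gamma>) * ((if w = [] then 1 else 0) + cycle_prob p q w * first_referable n1 2 w))
      = cycle_prob p q (True # True # w @ [False]) * expected_uncles_referred n1 \<gamma> (True # True # w @ [False])"
      using assms(4)
      by (simp add: dyck_words_def expected_uncles_referred_SSwH cycle_prob_def nS_def nH_def power2_eq_square
          algebra_simps)
  qed
qed

text \<open>The four summands are the contributions of the cycles H, SHS, SHH and SSwH.\<close>

lemma expected_uncles_closed_form:
  fixes p q \<gamma> :: real
  assumes "0 < q" "q < p" "p + q = 1" "2 \<le> n1"
  shows "p * 0 + q\<^sup>2 * p * 1 + q * p\<^sup>2 * 1 + q\<^sup>2 * p * (\<gamma> * (q / (p * (p - q)) * (1 - (q / p) ^ (n1 - 2)) + 1 / p)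
      + (1 - \<gamma>) * (1 + q * (1 - q ^ (n1 - 2)) / p))
    = q + q ^ 3 * \<gamma> / (p - q) - p ^ 3 / (p - q) * (q / p) ^ (n1 + 1) * \<gamma> - q ^ (n1 + 1) * (1 - \<gamma>)"
proof -
  define x where "x = (q / p) ^ (n1 - 2)"
  define y where "y = q ^ (n1 - 2)"
  have "n1 + 1 = (n1 - 2) + 3" using assms(4) by simp
  then have powers: "(q / p) ^ (n1 + 1) = x * q ^ 3 / p ^ 3" "q ^ (n1 + 1) = y * q ^ 3"
    unfolding x_def y_def by (simp_all only: power_add power_divide times_divide_eq_right)
  have "p \<noteq> 0" "p - q \<noteq> 0" using assms by simp_all
  have honest: "q\<^sup>2 * p * 1 + q * p\<^sup>2 * 1 = q * p * (p + q)"
    by (simp add: power2_eq_square algebra_simps)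
  have attacker: "q\<^sup>2 * p * (\<gamma> * (q / (p * (p - q)) * (1 - x)))
      = q ^ 3 * \<gamma> / (p - q) - p ^ 3 / (p - q) * (x * q ^ 3 / p ^ 3) * \<gamma>"
  proof -
    have "q\<^sup>2 * p * (\<gamma> * (q / (p * (p - q)) * (1 - x))) = q ^ 3 * \<gamma> * (1 - x) / (p - q)"
      using \<open>p \<noteq> 0\<close> \<open>p - q \<noteq> 0\<close> by (simp add: field_simps power2_eq_square power3_eq_cube)
    moreover have "p ^ 3 / (p - q) * (x * q ^ 3 / p ^ 3) * \<gamma> = x * q ^ 3 * \<gamma> / (p - q)"
      using \<open>p \<noteq> 0\<close> \<open>p - q \<noteq> 0\<close> by (simp add: field_simps)
    ultimately show ?thesis
      by (simp add: diff_divide_distrib algebra_simps)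
  qed
  have rest: "q\<^sup>2 * p * (\<gamma> * (1 / p) + (1 - \<gamma>) * (1 + q * (1 - y) / p)) = q\<^sup>2 - y * q ^ 3 * (1 - \<gamma>)"
  proof -
    have "q\<^sup>2 * p * (\<gamma> * (1 / p) + (1 - \<gamma>) * (1 + q * (1 - y) / p))
        = q\<^sup>2 * \<gamma> + q\<^sup>2 * (1 - \<gamma>) * (p + q) - y * q ^ 3 * (1 - \<gamma>)"
      using \<open>p \<noteq> 0\<close> by (simp add: field_simps power2_eq_square power3_eq_cube)
    then show ?thesis using assms(3) by (simp add: algebra_simps)
  qed
  have "q * p + q\<^sup>2 = q * (p + q)"
    by (simp add: power2_eq_square algebra_simps)
  with honest attacker rest assms(3) show ?thesis
    unfolding powers x_def[symmetric] y_def[symmetric] by (simp add: algebra_simps)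
qed

lemma has_sum_expected_uncles_referred_cycles:
  assumes "0 < q" "q < p" "p + q = 1" "2 \<le> n1"
  shows "((\<lambda>\<omega>. cycle_prob p q \<omega> * expected_uncles_referred n1 \<gamma> \<omega>)
      has_sum (q + q ^ 3 * \<gamma> / (p - q) - p ^ 3 / (p - q) * (q / p) ^ (n1 + 1) * \<gamma> - q ^ (n1 + 1) * (1 - \<gamma>)))
    {\<omega>. is_cycle \<omega>}"
proof -
  let ?E = "\<lambda>\<omega>. cycle_prob p q \<omega> * expected_uncles_referred n1 \<gamma> \<omega>"
  define X where "X = q\<^sup>2 * p * (\<gamma> * (q / (p * (p - q)) * (1 - (q / p) ^ (n1 - 2)) + 1 / p)
      + (1 - \<gamma>) * (1 + q * (1 - q ^ (n1 - 2)) / p))"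
  have "(?E has_sum (?E [False] + (?E [True, False, True] + (?E [True, False, False] + X)))) {\<omega>. is_cycle \<omega>}"
    unfolding cycles_eq Un_insert_left Un_empty_left X_def
    using has_sum_expected_uncles_referred_SSwH[OF assms, of \<gamma>]
    by (intro has_sum_insert) (auto simp: has_sum_reindex inj_on_def o_def)
  moreover have "?E [False] = p * 0" "?E [True, False, True] = q\<^sup>2 * p * 1" "?E [True, False, False] = q * p\<^sup>2 * 1"
    using assms(4)
    by (simp_all add: expected_uncles_referred_H expected_uncles_referred_SHS expected_uncles_referred_SHH
        cycle_prob_def nS_def nH_def power2_eq_square)
  ultimately show ?thesis
    using expected_uncles_closed_form[OF assms, of \<gamma>] unfolding X_def by (simp only: add.assoc)
qed

lemma has_sum_flags_uncles_referred:
  "((\<lambda>g. cycle_prob p q \<omega> * flags_prob \<gamma> g * real (uncles_referred n1 \<omega> g))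
      has_sum cycle_prob p q \<omega> * expected_uncles_referred n1 \<gamma> \<omega>) {g. length g = nH \<omega>}"
proof -
  have "finite {g :: bool list. length g = nH \<omega>}"
    using finite_lists_length_eq[of "UNIV :: bool set" "nH \<omega>"] by simp
  then show ?thesis
    by (simp add: has_sum_finite_iff expected_uncles_referred_def sum_distrib_left mult.assoc)
qed

theorem proposition7:
  fixes p q \<gamma> :: real and n1 :: nat
  assumes "0 < q" and "q < p" and "p + q = 1" and "0 \<le> \<gamma>" and "\<gamma> \<le> 1" and "2 \<le> n1"
  shows "((\<lambda>(\<omega>, g). cycle_prob p q \<omega> * flags_prob \<gamma> g * real (uncles_referred n1 \<omega> g))
           has_sum (q + q ^ 3 * \<gamma> / (p - q) - p ^ 3 / (p - q) * (q / p) ^ (n1 + 1) * \<gamma>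
                    - q ^ (n1 + 1) * (1 - \<gamma>))) cycle_outcomes"
proof -
  have "cycle_outcomes = Sigma {\<omega>. is_cycle \<omega>} (\<lambda>\<omega>. {g. length g = nH \<omega>})"
    by (auto simp: cycle_outcomes_def)
  moreover have "0 \<le> cycle_prob p q \<omega> * flags_prob \<gamma> g * real (uncles_referred n1 \<omega> g)" for \<omega> g
    using assms(1,2,4,5) by (simp add: cycle_prob_nonneg flags_prob_nonneg)
  ultimately show ?thesis
    using has_sum_Sigma_nonneg[OF has_sum_flags_uncles_referred
        has_sum_expected_uncles_referred_cycles[OF assms(1-3,6)]]
    by simp
qed

end
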